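(* Let $n=p_1^{\alpha_1}p_2^{\alpha_2}\cdots p_r^{\alpha_r}$, where $r\geq 2$, $\alpha_1,\ldots,\alpha_r$ are positive integers and $p_1<p_2<\cdots<p_r$ are primes. Let $m=p_{k_1}^{\beta_{k_1}}p_{k_2}^{\beta_{k_2}}\cdots p_{k_s}^{\beta_{k_s}}$, where $2\leq s\leq r$, $k_1<k_2<\cdots<k_s$ and $1\leq\beta_{k_i}\leq\alpha_{k_i}$ for $1\leq i\leq s$. Suppose that at least one of the following holds: (i) $2\phi(p_1p_2\cdots p_r)\geq p_1p_2\cdots p_r$; (ii) $\phi(p_{j+1})\geq r\,\phi(p_j)$ for each $j\in\{1,2,\ldots,r-1\}$. Then $\deg(m)>\deg(m/p_{k_i})$ in $\mathcal{P}(C_n)$ for every $i\in\{1,2,\ldots,s-1\}$.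
   Context: For a finite group $G$, the power graph $\mathcal{P}(G)$ is the simple undirected graph with vertex set $G$ in which two distinct vertices are adjacent if one is an integral power of the other. $C_n$ denotes the cyclic group of order $n$, identified with $\mathbb{Z}_n=\{0,1,\ldots,n-1\}$, so a positive divisor $d$ of $n$ is regarded as the element $d\bmod n\in\mathbb{Z}_n$. $\deg(a)$ is the degree of vertex $a$ in $\mathcal{P}(C_n)$ and $\phi$ is Euler's totient function. *)

theory Defs
  imports "HOL-Number_Theory.Number_Theory"
begin

text \<open>Power graph of the cyclic group C_n, identified with Z_n = {0,...,n-1} (additive).
  b is an integral power of a iff b = k*a mod n for some integer k.\<close>
definition is_power_Cn :: "nat \<Rightarrow> nat \<Rightarrow> nat \<Rightarrow> bool" where
  "is_power_Cn n b a \<longleftrightarrow> (\<exists>k::int. int b = (k * int a) mod int n)"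

definition pg_adj :: "nat \<Rightarrow> nat \<Rightarrow> nat \<Rightarrow> bool" where
  "pg_adj n a b \<longleftrightarrow> a < n \<and> b < n \<and> a \<noteq> b \<and> (is_power_Cn n b a \<or> is_power_Cn n a b)"

definition pg_deg :: "nat \<Rightarrow> nat \<Rightarrow> nat" where
  "pg_deg n a = card {b. b < n \<and> pg_adj n a b}"

end

theory Submission
  imports Defs
begin

(*
  Two elements of C_n are adjacent in the power graph iff their gcds with n are comparable under
  divisibility, so deg a + 1 counts the b < n whose gcd with n is comparable with gcd a n.

  Let q < p be prime divisors of m, m = q^beta * m' with q coprime to m', e = m/q and t = n/m.
  The b counted for e but not for m are multiples of e that are neither multiples of m nor have
  gcd b n = e: at most t q - t - phi(t q) of them. Every b with gcd b n = q^beta is counted for m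
  but not for e: phi(t m') of them. So deg m > deg e as soon as t q < t + phi(t q) + phi(t m').

  Since phi(x)/x is the product of the factors 1 - 1/p over the prime divisors p of x, it only
  decreases when primes are added. Under (i) this gives x <= 2 phi(x) for every divisor x of n.
  Under (ii) every prime divisor of n other than p_1 exceeds r, and the Weierstrass product
  inequality gives x <= (r + 1) phi(x), strictly if x misses such a prime. Either bound, together
  with phi(t q) >= phi(t) (q - 1) and phi(t m') >= phi(t) (p - 1) (or >= p phi(t) if p divides t),
  yields the inequality above.
*)

section \<open>Degrees in the power graph of a cyclic group\<close>

lemma is_power_Cn_iff_gcd_dvd:
  assumes "n > 0" "b < n"
  shows "is_power_Cn n b a \<longleftrightarrow> gcd a n dvd b"
proof
  assume "is_power_Cn n b a"
  then obtain k where k: "int b = (k * int a) mod int n" by (auto simp: is_power_Cn_def)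
  have "gcd (int a) (int n) dvd (k * int a) mod int n"
    by (simp add: dvd_mod)
  with k have "int (gcd a n) dvd int b" by simp
  then show "gcd a n dvd b" by simp
next
  assume "gcd a n dvd b"
  then obtain c where c: "b = gcd a n * c" by auto
  obtain u v where uv: "u * int a + v * int n = gcd (int a) (int n)" using bezout_int by blast
  have "(int c * u * int a) mod int n = (int c * (u * int a + v * int n)) mod int n"
    by (metis distrib_left mod_mult_self1 mult.assoc mult.commute)
  also have "\<dots> = int b mod int n" using uv c by (simp add: mult.commute)
  also have "\<dots> = int b" using assms(2) by simp
  finally show "is_power_Cn n b a" unfolding is_power_Cn_def by metis
qed

definition gcd_comparable :: "nat \<Rightarrow> nat \<Rightarrow> nat set" where
  "gcd_comparable n d = {b. b < n \<and> (d dvd gcd b n \<or> gcd b n dvd d)}"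

lemma finite_gcd_comparable [simp]: "finite (gcd_comparable n d)"
  by (simp add: gcd_comparable_def)

lemma pg_deg_eq_card_gcd_comparable:
  assumes "n > 0" "a < n"
  shows "pg_deg n a = card (gcd_comparable n (gcd a n)) - 1"
proof -
  have "{b. b < n \<and> pg_adj n a b} = gcd_comparable n (gcd a n) - {a}"
    using assms by (auto simp: pg_adj_def is_power_Cn_iff_gcd_dvd gcd_comparable_def)
  moreover have "a \<in> gcd_comparable n (gcd a n)"
    using assms by (simp add: gcd_comparable_def)
  ultimately show ?thesis by (simp add: pg_deg_def)
qed

lemma pg_deg_divisor:
  assumes "n > 0" "d dvd n"
  shows "pg_deg n (d mod n) = card (gcd_comparable n d) - 1"
proof -
  have "gcd (d mod n) n = d"
    using assms(2) by (metis gcd.commute gcd_nat.absorb_iff1 gcd_red_nat)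
  with assms show ?thesis by (simp add: pg_deg_eq_card_gcd_comparable)
qed

lemma card_multiples_less:
  assumes "d dvd n"
  shows "card {b. b < n \<and> d dvd b} = n div d"
proof (cases "d = 0")
  case False
  have "{b. b < n \<and> d dvd b} = (\<lambda>k. d * k) ` {..<n div d}"
    using assms False by (auto simp: image_iff dvd_def)
  moreover have "inj_on (\<lambda>k. d * k) {..<n div d}" using False by (auto simp: inj_on_def)
  ultimately show ?thesis by (simp add: card_image)
qed (use assms in simp)

lemma card_gcd_eq_less:
  assumes "n > 0" "d dvd n" "d \<noteq> n"
  shows "card {b. b < n \<and> gcd b n = d} = totient (n div d)"
proof -
  have "b < n \<and> gcd b n = d \<longleftrightarrow> b \<in> {0<..n} \<and> gcd b n = d" for b
    using assms by (cases "b = 0 \<or> b = n") auto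
  then have "{b. b < n \<and> gcd b n = d} = {k\<in>{0<..n}. gcd k n = d}" by blast
  with card_gcd_eq_totient[OF assms(1,2)] show ?thesis by simp
qed

lemma card_gcd_comparable_diff_le:
  assumes "n > 0" "e dvd d" "d dvd n" "e \<noteq> d"
  shows "card (gcd_comparable n e - gcd_comparable n d) + n div d + totient (n div e) \<le> n div e"
proof -
  define Me where "Me = {b. b < n \<and> e dvd b}"
  define Md where "Md = {b. b < n \<and> d dvd b}"
  define Ee where "Ee = {b. b < n \<and> gcd b n = e}"
  have e_dvd_n: "e dvd n" using assms(2,3) by (rule dvd_trans)
  have "e < n"
    using assms dvd_imp_le[OF assms(3,1)] dvd_imp_le[of e d] by (cases "d = 0") auto
  have disjoint: "Md \<inter> Ee = {}"
    using assms(2-4) by (auto simp: Md_def Ee_def dest: dvd_antisym)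
  have sub: "Md \<union> Ee \<subseteq> Me"
    using assms(2) by (auto simp: Me_def Md_def Ee_def intro: dvd_trans)
  have "finite Me" by (simp add: Me_def)
  then have "card (Me - (Md \<union> Ee)) + card Md + card Ee = card Me"
    using sub disjoint card_mono[OF _ sub] finite_subset[OF sub]
    by (simp add: card_Diff_subset card_Un_disjoint)
  moreover have "card Me = n div e" "card Md = n div d" "card Ee = totient (n div e)"
    using assms e_dvd_n \<open>e < n\<close> by (simp_all add: Me_def Md_def Ee_def card_multiples_less card_gcd_eq_less)
  moreover have "gcd_comparable n e - gcd_comparable n d \<subseteq> Me - (Md \<union> Ee)"
  proof
    fix b assume b: "b \<in> gcd_comparable n e - gcd_comparable n d"
    then have "\<not> gcd b n dvd e" "\<not> d dvd gcd b n"
      using assms(2) by (auto simp: gcd_comparable_def dest: dvd_trans)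
    with b assms(2,3) show "b \<in> Me - (Md \<union> Ee)"
      by (auto simp: gcd_comparable_def Me_def Md_def Ee_def intro: dvd_trans)
  qed
  then have "card (gcd_comparable n e - gcd_comparable n d) \<le> card (Me - (Md \<union> Ee))"
    by (intro card_mono) (auto simp: Me_def)
  ultimately show ?thesis by linarith
qed

lemma totient_le_card_gcd_comparable_diff:
  assumes "n > 0" "c dvd d" "d dvd n" "c \<noteq> n" "\<not> e dvd c" "\<not> c dvd e"
  shows "totient (n div c) \<le> card (gcd_comparable n d - gcd_comparable n e)"
proof -
  have "totient (n div c) = card {b. b < n \<and> gcd b n = c}"
    using assms by (simp add: card_gcd_eq_less dvd_trans)
  also have "\<dots> \<le> card (gcd_comparable n d - gcd_comparable n e)"
    using assms(2,5,6) by (intro card_mono) (auto simp: gcd_comparable_def)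
  finally show ?thesis .
qed

lemma pg_deg_less_of_divisors:
  assumes "n > 0" "e dvd d" "d dvd n" "e \<noteq> d" "c dvd d" "c \<noteq> n" "\<not> e dvd c" "\<not> c dvd e"
    and gap: "n div e < n div d + totient (n div e) + totient (n div c)"
  shows "pg_deg n (e mod n) < pg_deg n (d mod n)"
proof -
  let ?E = "gcd_comparable n e" and ?D = "gcd_comparable n d"
  have "card (?E - ?D) < totient (n div c)"
    using card_gcd_comparable_diff_le[OF assms(1-4)] gap by linarith
  also have "\<dots> \<le> card (?D - ?E)"
    using assms by (intro totient_le_card_gcd_comparable_diff) auto
  finally have "card ?E < card ?D"
    using card_Int_Diff[of ?E ?D] card_Int_Diff[of ?D ?E] by (simp add: Int_commute)
  moreover have "e \<in> ?E"
    using assms(1-4) dvd_imp_le[OF assms(3,1)] dvd_imp_le[of e d]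
    by (cases "d = 0") (auto simp: gcd_comparable_def dvd_trans)
  then have "card ?E > 0" by (auto simp: card_gt_0_iff)
  ultimately show ?thesis
    using assms(1-3) dvd_trans[OF assms(2,3)] by (simp add: pg_deg_divisor)
qed

section \<open>Estimates for the totient function\<close>

lemma totient_mult_ge: "totient a * totient b \<le> totient (a * b)"
proof (cases "a = 0 \<or> b = 0")
  case False
  then have "totient (gcd a b) > 0" by simp
  moreover have "totient a * totient b * totient (gcd a b) \<le> totient a * totient b * gcd a b"
    by (simp add: totient_le)
  ultimately show ?thesis
    by (metis totient_gcd mult_le_cancel2)
qed auto

lemma totient_mult_prime_dvd:
  assumes "prime p" "p dvd t"
  shows "totient (t * p) = p * totient t"
proof -
  have "totient (t * p) * (p - 1) = totient t * (p - 1) * p"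
    using totient_gcd[of t p] assms by (simp add: totient_prime gcd_nat.absorb2)
  moreover have "p - 1 > 0" using prime_gt_1_nat[OF assms(1)] by simp
  ultimately show ?thesis by simp
qed

lemma totient_gap_of_le_two_totient:
  fixes t m' p q :: nat
  assumes "prime q" "q < p" "p dvd m'" "m' > 0" "t > 0"
    and "t \<le> 2 * totient t" "t * m' \<le> 2 * totient (t * m')"
  shows "t * q < t + totient (t * q) + totient (t * m')"
proof -
  have "t * (q - 1) \<le> 2 * totient t * (q - 1)"
    using assms(6) by simp
  also have "\<dots> \<le> 2 * totient (t * q)"
    using totient_mult_ge[of t q] assms(1) by (simp add: totient_prime)
  finally have "t * (q - 1) \<le> 2 * totient (t * q)" .
  moreover have "t * q + t \<le> t * m'"
    using assms(2-4) dvd_imp_le[of p m'] mult_le_mono2[of "Suc q" m' t] by simp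
  moreover have "t * q = t * (q - 1) + t"
    using prime_gt_0_nat[OF assms(1)] by (cases q) auto
  ultimately show ?thesis using assms(5,7) by linarith
qed

lemma totient_gap_of_prime_ratio:
  fixes t m' p q r :: nat
  assumes "prime q" "prime p" "p dvd m'" "m' > 0" "t > 0"
    and ratio: "r * (q - 1) \<le> p - 1"
    and "t \<le> (r + 1) * totient t" "\<not> p dvd t \<Longrightarrow> t < (r + 1) * totient t"
  shows "t * q < t + totient (t * q) + totient (t * m')"
proof -
  obtain q' where q: "q = Suc q'" "q' > 0"
    using prime_gt_1_nat[OF assms(1)] by (cases q) auto
  obtain p' where p: "p = Suc p'"
    using prime_gt_0_nat[OF assms(2)] by (cases p) auto
  define f where "f = totient t"
  have "f > 0" using assms(5) by (simp add: f_def)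
  have tq: "f * q' \<le> totient (t * q)"
    using totient_mult_ge[of t q] assms(1) by (simp add: totient_prime q f_def)
  have ratio': "r * q' * f \<le> p' * f"
    using ratio by (simp add: p q)
  have q_split: "t * q = t * q' + t" by (simp add: q)
  show ?thesis
  proof (cases "p dvd t")
    case True
    have "p * f = totient (t * p)"
      using totient_mult_prime_dvd[OF assms(2) True] by (simp add: f_def)
    also have "\<dots> \<le> totient (t * m')"
      using assms(3-5) by (intro totient_dvd_mono) auto
    finally have "p' * f + f \<le> totient (t * m')" by (simp add: p)
    moreover have "t * q' \<le> r * q' * f + f * q'"
      using mult_le_mono1[OF assms(7), of q'] by (simp add: f_def algebra_simps)
    ultimately show ?thesis
      using tq ratio' q_split \<open>f > 0\<close> by linarith
  next
    case False
    have "p' * f \<le> totient m' * totient t"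
      using totient_dvd_mono[OF assms(3,4)] assms(2) by (simp add: totient_prime p f_def)
    also have "\<dots> \<le> totient (t * m')"
      using totient_mult_ge[of t m'] by (simp add: mult.commute)
    finally have "p' * f \<le> totient (t * m')" .
    moreover have "t * q' < r * q' * f + f * q'"
      using mult_less_mono1[OF assms(8)[OF False] \<open>q' > 0\<close>] by (simp add: f_def algebra_simps)
    ultimately show ?thesis
      using tq ratio' q_split by linarith
  qed
qed

section \<open>The ratio totient x / x\<close>

definition totient_density :: "nat \<Rightarrow> real" where
  "totient_density x = (\<Prod>p\<in>prime_factors x. 1 - 1 / real p)"

lemma totient_eq_mult_totient_density: "real (totient x) = real x * totient_density x"
  by (simp add: totient_density_def totient_formula2)

lemma prime_factor_density_bounds:
  assumes "p \<in> prime_factors x"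
  shows "1 / 2 \<le> 1 - 1 / real p" "1 - 1 / real p \<le> 1"
proof -
  have "2 \<le> real p" using assms prime_ge_2_nat[of p] by auto
  then show "1 / 2 \<le> 1 - 1 / real p" "1 - 1 / real p \<le> 1" by (auto simp: field_simps)
qed

lemma totient_density_nonneg: "0 \<le> totient_density x"
  unfolding totient_density_def
  by (intro prod_nonneg) (use prime_factor_density_bounds in fastforce)

lemma totient_density_antimono:
  assumes "prime_factors x \<subseteq> prime_factors y"
  shows "totient_density y \<le> totient_density x"
proof -
  have "totient_density y
      = totient_density x * (\<Prod>p\<in>prime_factors y - prime_factors x. 1 - 1 / real p)"
    unfolding totient_density_def using prod.subset_diff[OF assms] by (simp add: mult.commute)
  moreover have "(\<Prod>p\<in>prime_factors y - prime_factors x. 1 - 1 / real p) \<le> 1"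
    by (intro prod_le_1) (use prime_factor_density_bounds in fastforce)
  ultimately show ?thesis
    using totient_density_nonneg[of x] by (simp add: mult_left_le)
qed

lemma prime_factors_radical: "prime_factors (\<Prod>(prime_factors n)) = prime_factors (n :: nat)"
proof -
  have "prime_factors (\<Prod>p\<in>prime_factors n. p) = (\<Union>p\<in>prime_factors n. prime_factors p)"
    by (subst prime_factors_prod) auto
  also have "\<dots> = prime_factors n"
    by (auto simp: prime_prime_factors in_prime_factors_iff)
  finally show ?thesis by simp
qed

lemma le_two_totient_of_dvd:
  assumes "n \<noteq> 0" "\<Prod>(prime_factors n) \<le> 2 * totient (\<Prod>(prime_factors n))" "x dvd n"
  shows "x \<le> 2 * totient x"
proof -
  define R where "R = \<Prod>(prime_factors n)"
  have "0 < R"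
    unfolding R_def by (intro prod_pos) (auto simp: in_prime_factors_iff prime_gt_0_nat)
  have "totient_density R = totient_density n"
    by (simp add: R_def totient_density_def prime_factors_radical)
  then have "real R * 1 \<le> real R * (2 * totient_density n)"
    using assms(2) totient_eq_mult_totient_density[of R] unfolding R_def[symmetric]
    by (simp add: algebra_simps)
  then have "1 \<le> 2 * totient_density n"
    using \<open>0 < R\<close> by (simp only: mult_le_cancel_left_pos of_nat_0_less_iff)
  also have "\<dots> \<le> 2 * totient_density x"
    using assms(1,3) by (simp add: totient_density_antimono dvd_prime_factors)
  finally have "real x * 1 \<le> real x * (2 * totient_density x)"
    by (intro mult_left_mono) auto
  then show ?thesis
    using totient_eq_mult_totient_density[of x] by (simp add: algebra_simps)
qed

lemma one_minus_sum_le_prod_one_minus: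
  fixes f :: "'a \<Rightarrow> real"
  assumes "\<And>x. x \<in> A \<Longrightarrow> 0 \<le> f x \<and> f x \<le> 1"
  shows "1 - sum f A \<le> (\<Prod>x\<in>A. 1 - f x)"
  using assms
proof (induction A rule: infinite_finite_induct)
  case (insert x A)
  have "0 \<le> (\<Prod>x\<in>A. 1 - f x)" "(\<Prod>x\<in>A. 1 - f x) \<le> 1"
    using insert.prems by (auto intro: prod_nonneg prod_le_1)
  moreover have "0 \<le> f x" "f x \<le> 1" "1 - sum f A \<le> (\<Prod>x\<in>A. 1 - f x)"
    using insert by auto
  moreover have "f x * (\<Prod>x\<in>A. 1 - f x) \<le> f x"
    using calculation by (simp add: mult_left_le)
  ultimately have "1 - sum f A - f x \<le> (1 - f x) * (\<Prod>x\<in>A. 1 - f x)"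
    by (simp add: algebra_simps)
  with insert.hyps show ?case by simp
qed auto

lemma totient_density_ge:
  fixes x p1 k :: nat
  assumes "\<And>p. p \<in> prime_factors x - {p1} \<Longrightarrow> k \<le> p" "0 < k"
  shows "(1 - card (prime_factors x - {p1}) / k) / 2 \<le> totient_density x"
proof -
  let ?S = "prime_factors x - {p1}" and ?g = "\<lambda>p::nat. 1 - 1 / real p"
  have S_bounds: "0 \<le> 1 / real p \<and> 1 / real p \<le> 1" if "p \<in> ?S" for p
    using that prime_factor_density_bounds[of p x] by auto
  have "1 - card ?S / k \<le> 1 - (\<Sum>p\<in>?S. 1 / real p)"
  proof -
    have "(\<Sum>p\<in>?S. 1 / real p) \<le> (\<Sum>p\<in>?S. 1 / real k)"
      using assms by (intro sum_mono frac_le) auto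
    then show ?thesis by simp
  qed
  also have "\<dots> \<le> prod ?g ?S"
    using S_bounds by (rule one_minus_sum_le_prod_one_minus)
  finally have S_part: "(1 - card ?S / k) / 2 \<le> prod ?g ?S / 2" by (rule divide_right_mono) simp
  have "0 \<le> prod ?g ?S"
    by (intro prod_nonneg) (use prime_factor_density_bounds in fastforce)
  moreover have "totient_density x = prod ?g ?S"
    if "p1 \<notin> prime_factors x"
    using that by (simp add: totient_density_def)
  moreover have "totient_density x = ?g p1 * prod ?g ?S" "1 / 2 \<le> ?g p1"
    if "p1 \<in> prime_factors x"
    using that prime_factor_density_bounds(1)[OF that]
    by (simp_all add: totient_density_def prod.remove)
  ultimately have "prod ?g ?S / 2 \<le> totient_density x"
    by (cases "p1 \<in> prime_factors x") (auto intro: mult_right_mono[of "1/2" _ "prod ?g ?S", simplified])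
  with S_part show ?thesis by linarith
qed

lemma le_totient_of_large_primes:
  fixes n x p :: nat
  defines "r \<equiv> card (prime_factors n)" and "p1 \<equiv> Min (prime_factors n)"
  assumes "prime_factors n \<noteq> {}"
    and large: "\<And>s. s \<in> prime_factors n \<Longrightarrow> s \<noteq> p1 \<Longrightarrow> r < s"
    and "x dvd n"
  shows "x \<le> (r + 1) * totient x"
    and "p \<in> prime_factors n \<Longrightarrow> p \<noteq> p1 \<Longrightarrow> \<not> p dvd x \<Longrightarrow> x < (r + 1) * totient x"
proof -
  let ?c = "card (prime_factors x - {p1})"
  have "n \<noteq> 0" using assms(3) by (cases "n = 0") auto
  then have "x \<noteq> 0" using assms(5) by auto
  have p1: "p1 \<in> prime_factors n"
    unfolding p1_def using assms(3) by (intro Min_in) auto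
  have sub: "prime_factors x - {p1} \<subseteq> prime_factors n - {p1}"
    using dvd_prime_factors[OF \<open>n \<noteq> 0\<close> assms(5)] by auto
  have "(1 - ?c / real (r + 1)) / 2 \<le> totient_density x"
    using sub large by (intro totient_density_ge) (auto simp: Suc_le_eq)
  then have "(real r + 1 - ?c) / 2 \<le> (real r + 1) * totient_density x"
    by (simp add: field_simps)
  then have "real x * ((real r + 1 - ?c) / 2) \<le> real x * ((real r + 1) * totient_density x)"
    by (intro mult_left_mono) auto
  also have "\<dots> = real ((r + 1) * totient x)"
    using totient_eq_mult_totient_density[of x] by (simp add: algebra_simps)
  finally have bound: "real x * ((real r + 1 - ?c) / 2) \<le> real ((r + 1) * totient x)" .
  have "?c \<le> r - 1"
    using card_mono[OF _ sub] p1 by (simp add: r_def)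
  moreover have "1 \<le> r"
    using p1 by (auto simp: r_def Suc_le_eq card_gt_0_iff)
  ultimately have "real x * 1 \<le> real x * ((real r + 1 - ?c) / 2)"
    by (intro mult_left_mono) auto
  with bound show "x \<le> (r + 1) * totient x" by linarith
  assume p: "p \<in> prime_factors n" "p \<noteq> p1" "\<not> p dvd x"
  then have "prime_factors x - {p1} \<subseteq> prime_factors n - {p1} - {p}"
    using sub by auto
  from card_mono[OF _ this] have "?c \<le> r - 2"
    using p p1 by (simp add: r_def)
  moreover have "2 \<le> r"
    using p p1 card_mono[of "prime_factors n" "{p, p1}"] by (simp add: r_def)
  ultimately have "real x * 1 < real x * ((real r + 1 - ?c) / 2)"
    using \<open>x \<noteq> 0\<close> by (intro mult_strict_left_mono) auto
  with bound show "x < (r + 1) * totient x" by linarith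
qed

section \<open>The hypotheses on the prime divisors of n\<close>

lemma mult_le_of_consecutive_mult_le:
  fixes g :: "nat \<Rightarrow> nat"
  assumes step: "\<And>j. Suc j < N \<Longrightarrow> r * g j \<le> g (Suc j)" and "1 \<le> r"
    and "i < k" "k < N"
  shows "r * g i \<le> g k"
  using assms(3,4)
proof (induction k)
  case (Suc k)
  show ?case
  proof (cases "i = k")
    case True
    with Suc.prems step show ?thesis by simp
  next
    case False
    with Suc have "r * g i \<le> g k" by simp
    also have "\<dots> \<le> r * g k" using \<open>1 \<le> r\<close> by simp
    also have "\<dots> \<le> g (Suc k)" using Suc.prems step by simp
    finally show ?thesis .
  qed
qed simp

lemma prime_ratio_of_sorted_totient_ratio:
  fixes P :: "nat set"
  defines "ps \<equiv> sorted_list_of_set P"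
  assumes "finite P" "\<forall>x\<in>P. prime x" "1 \<le> r"
    and ratio: "\<forall>j. Suc j < length ps \<longrightarrow> r * totient (ps ! j) \<le> totient (ps ! Suc j)"
    and "a \<in> P" "b \<in> P" "a < b"
  shows "r * (a - 1) \<le> b - 1"
proof -
  have "set ps = P" "sorted ps" using assms(2) by (auto simp: ps_def)
  then obtain i k where i: "i < length ps" "ps ! i = a" and k: "k < length ps" "ps ! k = b"
    using assms(6,7) by (metis in_set_conv_nth)
  have "i < k"
    using sorted_nth_mono[OF \<open>sorted ps\<close>, of k i] i k \<open>a < b\<close> by (cases "k \<le> i") auto
  then have "r * totient a \<le> totient b"
    using mult_le_of_consecutive_mult_le[of "length ps" r "\<lambda>j. totient (ps ! j)" i k] ratio
      \<open>1 \<le> r\<close> i k by auto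
  with assms(3,6,7) show ?thesis by (simp add: totient_prime)
qed

lemma totient_gap_of_condition_i:
  fixes n t m' p q :: nat
  assumes "n \<noteq> 0" "\<Prod>(prime_factors n) \<le> 2 * totient (\<Prod>(prime_factors n))"
    and "t * m' dvd n" "prime q" "q < p" "p dvd m'"
  shows "t * q < t + totient (t * q) + totient (t * m')"
proof -
  have "t * m' \<noteq> 0" using assms(1,3) by auto
  moreover have "t dvd n" using assms(3) by (rule dvd_mult_left)
  ultimately show ?thesis
    using assms le_two_totient_of_dvd[OF assms(1,2)]
    by (intro totient_gap_of_le_two_totient[of q p m']) auto
qed

lemma totient_gap_of_condition_ii:
  fixes n t m' p q :: nat
  defines "ps \<equiv> sorted_list_of_set (prime_factors n)"
  assumes ratio: "\<forall>j. Suc j < length ps \<longrightarrow>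
      card (prime_factors n) * totient (ps ! j) \<le> totient (ps ! Suc j)"
    and "q \<in> prime_factors n" "p \<in> prime_factors n" "q < p" "t * m' dvd n" "p dvd m'"
  shows "t * q < t + totient (t * q) + totient (t * m')"
proof -
  define r where "r = card (prime_factors n)"
  define p1 where "p1 = Min (prime_factors n)"
  have "n \<noteq> 0" using assms(3) by (cases "n = 0") auto
  have "1 \<le> r" using assms(3) by (auto simp: r_def Suc_le_eq card_gt_0_iff)
  have pair_ratio: "r * (a - 1) \<le> b - 1"
    if "a \<in> prime_factors n" "b \<in> prime_factors n" "a < b" for a b
    using that ratio \<open>1 \<le> r\<close>
    by (intro prime_ratio_of_sorted_totient_ratio[where P = "prime_factors n"])
       (auto simp: ps_def r_def)
  have p1: "p1 \<in> prime_factors n" "p1 \<le> q"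
    using assms(3) by (auto simp: p1_def intro!: Min_in)
  have large: "r < s" if "s \<in> prime_factors n" "s \<noteq> p1" for s
  proof -
    have "p1 \<le> s" unfolding p1_def using that(1) by (intro Min_le) auto
    with that(2) have "p1 < s" by simp
    then have "r * (p1 - 1) \<le> s - 1" using pair_ratio p1 that by blast
    moreover have "2 \<le> p1" "2 \<le> s"
      using p1 that by (auto intro: prime_ge_2_nat)
    ultimately show "r < s"
      using mult_le_mono2[of 1 "p1 - 1" r] by linarith
  qed
  have "t * m' \<noteq> 0" using \<open>n \<noteq> 0\<close> assms(6) by auto
  have "t dvd n" using assms(6) by (rule dvd_mult_left)
  have nonempty: "prime_factors n \<noteq> {}" using assms(3) by auto
  have "p \<noteq> p1" using p1(2) assms(5) by simp
  show ?thesis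
  proof (rule totient_gap_of_prime_ratio[where r = r])
    show "r * (q - 1) \<le> p - 1" using pair_ratio assms(3-5) by blast
    show "t \<le> (r + 1) * totient t"
      using le_totient_of_large_primes(1)[OF nonempty _ \<open>t dvd n\<close>] large
      unfolding r_def p1_def by blast
    show "t < (r + 1) * totient t" if "\<not> p dvd t"
      using le_totient_of_large_primes(2)[OF nonempty _ \<open>t dvd n\<close> assms(4)] large
        \<open>p \<noteq> p1\<close> that
      unfolding r_def p1_def by blast
  qed (use assms(3,4,7) \<open>t * m' \<noteq> 0\<close> in auto)
qed

section \<open>Removing one prime factor from m\<close>

lemma prime_power_cofactor:
  fixes m p q :: nat
  assumes "m \<noteq> 0" "prime q" "q dvd m" "prime p" "p dvd m" "p \<noteq> q"
  obtains \<beta> m' where "m = q ^ \<beta> * m'" "0 < \<beta>" "\<not> q dvd m'" "p dvd m'"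
proof -
  obtain m' where m: "m = q ^ multiplicity q m * m'" "\<not> q dvd m'"
    using assms(1,2) multiplicity_decompose'[of m q] not_prime_unit by blast
  moreover have "0 < multiplicity q m"
    using assms(1-3) by (simp add: prime_multiplicity_gt_zero_iff)
  moreover have "p dvd m'"
  proof -
    have "\<not> p dvd q ^ multiplicity q m"
      using assms(2,4,6) prime_dvd_power primes_dvd_imp_eq by blast
    then show ?thesis
      using assms(4,5) m(1) prime_dvd_mult_iff by metis
  qed
  ultimately show ?thesis using that by blast
qed

lemma prime_power_cofactor_incomparable:
  fixes q \<beta> m' :: nat
  assumes "prime q" "0 < \<beta>" "\<not> q dvd m'" "m' \<noteq> 1"
  shows "\<not> q ^ (\<beta> - 1) * m' dvd q ^ \<beta>" and "\<not> q ^ \<beta> dvd q ^ (\<beta> - 1) * m'"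
proof
  assume "q ^ (\<beta> - 1) * m' dvd q ^ \<beta>"
  then have "m' dvd q ^ \<beta>" by (rule dvd_mult_right)
  moreover have "coprime q m'"
    using assms(1,3) by (simp add: prime_imp_coprime)
  then have "coprime m' (q ^ \<beta>)"
    by (simp add: coprime_commute)
  ultimately have "is_unit m'"
    using coprime_common_divisor[of m' "q ^ \<beta>" m'] by simp
  with assms(4) show False by simp
next
  have "q ^ \<beta> = q ^ (\<beta> - 1) * q"
    using assms(2) by (simp add: power_eq_if)
  then show "\<not> q ^ \<beta> dvd q ^ (\<beta> - 1) * m'"
    using assms(1,3) by (simp add: prime_gt_0_nat)
qed

lemma pg_deg_div_prime_less:
  fixes n m q \<beta> m' :: nat
  assumes "n \<noteq> 0" "m dvd n" "prime q" "m = q ^ \<beta> * m'" "0 < \<beta>" "\<not> q dvd m'" "m' \<noteq> 1"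
    and gap: "n div m * q < n div m + totient (n div m * q) + totient (n div m * m')"
  shows "pg_deg n ((m div q) mod n) < pg_deg n (m mod n)"
proof -
  define e where "e = q ^ (\<beta> - 1) * m'"
  have m_eq: "m = q * e"
    using assms(4,5) by (simp add: e_def power_eq_if mult.assoc)
  have "m \<noteq> 0" "1 < q" using assms(1,2) prime_gt_1_nat[OF assms(3)] by auto
  have "e \<noteq> 0" using m_eq \<open>m \<noteq> 0\<close> by simp
  have "m div q = e" using m_eq \<open>1 < q\<close> by simp
  have "e \<noteq> m" using m_eq \<open>e \<noteq> 0\<close> \<open>1 < q\<close> by simp
  have "e dvd m" unfolding m_eq by simp
  have "q ^ \<beta> dvd m" unfolding assms(4) by simp
  have incomparable: "\<not> e dvd q ^ \<beta>" "\<not> q ^ \<beta> dvd e"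
    unfolding e_def using prime_power_cofactor_incomparable[OF assms(3,5-7)] by auto
  have "q ^ \<beta> \<noteq> n"
    using incomparable(1) \<open>e dvd m\<close> assms(2) dvd_trans by blast
  obtain t where n: "n = m * t" using assms(2) by (rule dvdE)
  have "n div e = n div m * q"
    using n m_eq \<open>e \<noteq> 0\<close> \<open>m \<noteq> 0\<close> by (simp add: ac_simps)
  moreover have "n div q ^ \<beta> = n div m * m'"
    using n assms(4) \<open>m \<noteq> 0\<close> \<open>1 < q\<close> by (simp add: ac_simps)
  ultimately show ?thesis
    using pg_deg_less_of_divisors[OF _ \<open>e dvd m\<close> assms(2) \<open>e \<noteq> m\<close> \<open>q ^ \<beta> dvd m\<close>
        \<open>q ^ \<beta> \<noteq> n\<close> incomparable] assms(1) gap \<open>m div q = e\<close>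
    by simp
qed

theorem proposition4p1:
  fixes n m :: nat
  assumes "card (prime_factors n) \<ge> 2"
    and "m dvd n"
    and "card (prime_factors m) \<ge> 2"
    and "2 * totient (\<Prod>(prime_factors n)) \<ge> \<Prod>(prime_factors n)
         \<or> (let ps = sorted_list_of_set (prime_factors n) in
              \<forall>j. Suc j < length ps \<longrightarrow>
                totient (ps ! Suc j) \<ge> card (prime_factors n) * totient (ps ! j))"
  shows "\<forall>q \<in> prime_factors m. q < Max (prime_factors m) \<longrightarrow>
           pg_deg n (m mod n) > pg_deg n ((m div q) mod n)"
proof (intro ballI impI)
  fix q assume q: "q \<in> prime_factors m" and "q < Max (prime_factors m)"
  define p where "p = Max (prime_factors m)"
  have "n \<noteq> 0" "m \<noteq> 0" using assms(1,3) by (cases "n = 0"; cases "m = 0"; simp)+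
  have p: "p \<in> prime_factors m" "q < p"
    using assms(3) \<open>q < Max (prime_factors m)\<close> by (auto simp: p_def intro!: Max_in)
  obtain \<beta> m' where m: "m = q ^ \<beta> * m'" "0 < \<beta>" "\<not> q dvd m'" "p dvd m'"
    using prime_power_cofactor[of m q p] \<open>m \<noteq> 0\<close> q p by auto
  have in_n: "q \<in> prime_factors n" "p \<in> prime_factors n"
    using q p dvd_prime_factors[OF \<open>n \<noteq> 0\<close> assms(2)] by auto
  have "n div m * m' dvd n"
    using assms(2) m(1) by (auto simp: ac_simps elim!: dvdE)
  have "prime q" using q by auto
  have "n div m * q < n div m + totient (n div m * q) + totient (n div m * m')"
    using assms(4)
  proof
    assume "\<Prod>(prime_factors n) \<le> 2 * totient (\<Prod>(prime_factors n))"
    with \<open>n \<noteq> 0\<close> show ?thesis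
      using \<open>n div m * m' dvd n\<close> \<open>prime q\<close> p(2) m(4)
      by (rule totient_gap_of_condition_i)
  next
    assume "let ps = sorted_list_of_set (prime_factors n) in
      \<forall>j. Suc j < length ps \<longrightarrow> card (prime_factors n) * totient (ps ! j) \<le> totient (ps ! Suc j)"
    then show ?thesis
      using in_n p(2) \<open>n div m * m' dvd n\<close> m(4)
      unfolding Let_def by (rule totient_gap_of_condition_ii)
  qed
  moreover have "m' \<noteq> 1" using m(4) p(1) by (auto simp: in_prime_factors_iff)
  ultimately show "pg_deg n ((m div q) mod n) < pg_deg n (m mod n)"
    using pg_deg_div_prime_less[OF \<open>n \<noteq> 0\<close> assms(2) \<open>prime q\<close> m(1-3)] by blast
qed

end
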